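(* Let $a=a_0+a_1e_1+a_2e_2+a_3e_3\in C\ell_2\setminus\mathbb{R}$ with $G(a)=0$. Then there exists $u\in C\ell_2\setminus Z(C\ell_2)$ such that $u^{-1}au=a_0+e_2+e_3$.
   Context: $C\ell_2$ is the 4-dimensional real associative algebra with basis $1,e_1,e_2,e_3$ and multiplication $e_1^2=e_2^2=1$, $e_3^2=-1$, $e_1e_2=e_3=-e_2e_1$, $e_1e_3=e_2=-e_3e_1$, $e_3e_2=e_1=-e_2e_3$; $\mathbb{R}$ is identified with $\mathbb{R}\cdot1$. For $a=a_0+a_1e_1+a_2e_2+a_3e_3$: $G(a)=a_1^2+a_2^2-a_3^2$, $H_a=a_0^2-a_1^2-a_2^2+a_3^2$; $Z(C\ell_2)=\{a:H_a=0\}$, and elements outside $Z(C\ell_2)$ are invertible. *)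

theory Defs
  imports Main "HOL.Real"
begin

text \<open>Elements a0 + a1 e1 + a2 e2 + a3 e3 of the Clifford algebra Cl_2.\<close>
datatype cl2 = Cl2 (c0: real) (c1: real) (c2: real) (c3: real)

text \<open>Multiplication determined by e1^2 = e2^2 = 1, e3^2 = -1, e1 e2 = e3 = - e2 e1,
  e1 e3 = e2 = - e3 e1, e3 e2 = e1 = - e2 e3, extended bilinearly.\<close>
definition cl2_mult :: "cl2 \<Rightarrow> cl2 \<Rightarrow> cl2" where
  "cl2_mult x y = Cl2
     (c0 x * c0 y + c1 x * c1 y + c2 x * c2 y - c3 x * c3 y)
     (c0 x * c1 y + c1 x * c0 y + c3 x * c2 y - c2 x * c3 y)
     (c0 x * c2 y + c2 x * c0 y + c1 x * c3 y - c3 x * c1 y)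
     (c0 x * c3 y + c3 x * c0 y + c1 x * c2 y - c2 x * c1 y)"

definition cl2_one :: cl2 where "cl2_one = Cl2 1 0 0 0"

definition cl2_of_real :: "real \<Rightarrow> cl2" where "cl2_of_real r = Cl2 r 0 0 0"

definition cl2_inv :: "cl2 \<Rightarrow> cl2" where
  "cl2_inv u = (THE v. cl2_mult u v = cl2_one \<and> cl2_mult v u = cl2_one)"

definition cl2_G :: "cl2 \<Rightarrow> real" where
  "cl2_G a = (c1 a)^2 + (c2 a)^2 - (c3 a)^2"

definition cl2_H :: "cl2 \<Rightarrow> real" where
  "cl2_H a = (c0 a)^2 - (c1 a)^2 - (c2 a)^2 + (c3 a)^2"

definition cl2_Z :: "cl2 set" where
  "cl2_Z = {a. cl2_H a = 0}"

end

theory Submission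
  imports Defs
begin

text \<open>Write a = a0 + v and w = e2 + e3. When G(a) = 0 both v and w square to zero, so
  v (v + w) = v w = (v + w) w: conjugation by v + w carries a to a0 + w, and
  H(v + w) = 2 (a3 - a2). If a2 = a3, then a1 = 0 and v = a3 w with a3 \<noteq> 0 since a is not real;
  as e1 anticommutes with w (e1 w = w = - w e1), conjugation by (a3 + 1) + (a3 - 1) e1, whose
  H is 4 a3, rescales a3 w to w.\<close>

lemma cl2_eq_iff: "x = y \<longleftrightarrow> c0 x = c0 y \<and> c1 x = c1 y \<and> c2 x = c2 y \<and> c3 x = c3 y"
  by (cases x; cases y) auto

lemma cl2_mult_assoc: "cl2_mult (cl2_mult x y) z = cl2_mult x (cl2_mult y z)"
  unfolding cl2_mult_def cl2.sel cl2.inject by (simp add: algebra_simps)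

lemma cl2_mult_one_right [simp]: "cl2_mult x cl2_one = x"
  and cl2_mult_one_left [simp]: "cl2_mult cl2_one x = x"
  by (simp_all add: cl2_mult_def cl2_one_def cl2_eq_iff)

lemma cl2_of_real_one: "cl2_of_real 1 = cl2_one"
  by (simp add: cl2_of_real_def cl2_one_def)

lemma cl2_mult_of_real: "cl2_mult (cl2_of_real r) (cl2_of_real s) = cl2_of_real (r * s)"
  by (simp add: cl2_mult_def cl2_of_real_def)

lemma cl2_mult_of_real_commute: "cl2_mult x (cl2_of_real r) = cl2_mult (cl2_of_real r) x"
  by (simp add: cl2_mult_def cl2_of_real_def algebra_simps)

definition cl2_conj :: "cl2 \<Rightarrow> cl2" where
  "cl2_conj u = Cl2 (c0 u) (- c1 u) (- c2 u) (- c3 u)"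

lemma cl2_mult_conj_right: "cl2_mult u (cl2_conj u) = cl2_of_real (cl2_H u)"
  and cl2_mult_conj_left: "cl2_mult (cl2_conj u) u = cl2_of_real (cl2_H u)"
  by (simp_all add: cl2_mult_def cl2_conj_def cl2_of_real_def cl2_H_def power2_eq_square algebra_simps)

definition cl2_inverse :: "cl2 \<Rightarrow> cl2" where
  "cl2_inverse u = cl2_mult (cl2_of_real (1 / cl2_H u)) (cl2_conj u)"

lemma cl2_mult_inverse:
  assumes "cl2_H u \<noteq> 0"
  shows cl2_mult_inverse_right: "cl2_mult u (cl2_inverse u) = cl2_one"
    and cl2_mult_inverse_left: "cl2_mult (cl2_inverse u) u = cl2_one"
proof -
  let ?r = "cl2_of_real (1 / cl2_H u)"
  have r: "cl2_mult ?r (cl2_of_real (cl2_H u)) = cl2_one"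
    using assms by (simp add: cl2_mult_of_real cl2_of_real_one)
  have "cl2_mult u (cl2_inverse u) = cl2_mult (cl2_mult u ?r) (cl2_conj u)"
    by (simp only: cl2_inverse_def cl2_mult_assoc)
  also have "\<dots> = cl2_mult ?r (cl2_mult u (cl2_conj u))"
    by (simp only: cl2_mult_of_real_commute cl2_mult_assoc)
  finally show "cl2_mult u (cl2_inverse u) = cl2_one"
    by (simp only: cl2_mult_conj_right r)
  show "cl2_mult (cl2_inverse u) u = cl2_one"
    by (simp only: cl2_inverse_def cl2_mult_assoc cl2_mult_conj_left r)
qed

lemma cl2_inv_eq_inverse:
  assumes "cl2_H u \<noteq> 0"
  shows "cl2_inv u = cl2_inverse u"
  unfolding cl2_inv_def
proof (rule the_equality)
  show "cl2_mult u (cl2_inverse u) = cl2_one \<and> cl2_mult (cl2_inverse u) u = cl2_one"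
    using cl2_mult_inverse[OF assms] by blast
next
  fix v assume "cl2_mult u v = cl2_one \<and> cl2_mult v u = cl2_one"
  then have uv: "cl2_mult u v = cl2_one" by blast
  have "v = cl2_mult (cl2_mult (cl2_inverse u) u) v"
    by (simp add: cl2_mult_inverse_left[OF assms])
  also have "\<dots> = cl2_inverse u"
    by (simp add: cl2_mult_assoc uv)
  finally show "v = cl2_inverse u" .
qed

lemma cl2_inv_conjugate_eq:
  assumes "cl2_H u \<noteq> 0" and "cl2_mult a u = cl2_mult u b"
  shows "cl2_mult (cl2_mult (cl2_inv u) a) u = b"
proof -
  have "cl2_mult (cl2_mult (cl2_inverse u) a) u = cl2_mult (cl2_mult (cl2_inverse u) u) b"
    by (simp only: cl2_mult_assoc assms(2))
  then show ?thesis
    by (simp add: cl2_inv_eq_inverse cl2_mult_inverse_left assms(1))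
qed

lemma cl2_intertwine_null:
  assumes "cl2_G a = 0"
  defines "u \<equiv> Cl2 0 (c1 a) (c2 a + 1) (c3 a + 1)"
  shows "cl2_mult a u = cl2_mult u (Cl2 (c0 a) 0 1 1)"
    and "cl2_H u = 2 * (c3 a - c2 a)"
  using assms by (simp_all add: cl2_mult_def cl2_G_def cl2_H_def algebra_simps power2_eq_square)

lemma cl2_intertwine_null_multiple:
  fixes a0 t :: real
  defines "u \<equiv> Cl2 (t + 1) (t - 1) 0 0"
  shows "cl2_mult (Cl2 a0 0 t t) u = cl2_mult u (Cl2 a0 0 1 1)"
    and "cl2_H u = 4 * t"
  by (simp_all add: u_def cl2_mult_def cl2_H_def algebra_simps power2_eq_square)

theorem proposition5p5:
  fixes a :: cl2
  assumes "a \<notin> range cl2_of_real"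
    and "cl2_G a = 0"
  shows "\<exists>u. u \<notin> cl2_Z \<and>
           cl2_mult (cl2_mult (cl2_inv u) a) u = Cl2 (c0 a) 0 1 1"
proof (cases "c2 a = c3 a")
  case False
  let ?u = "Cl2 0 (c1 a) (c2 a + 1) (c3 a + 1)"
  have "cl2_H ?u \<noteq> 0"
    using False cl2_intertwine_null(2)[OF assms(2)] by simp
  with cl2_intertwine_null(1)[OF assms(2)] show ?thesis
    unfolding cl2_Z_def by (blast intro: cl2_inv_conjugate_eq)
next
  case True
  with assms(2) have "c1 a = 0" by (simp add: cl2_G_def)
  with True have a: "a = Cl2 (c0 a) 0 (c3 a) (c3 a)" by (simp add: cl2_eq_iff)
  let ?u = "Cl2 (c3 a + 1) (c3 a - 1) 0 0"
  have "c3 a \<noteq> 0"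
    using assms(1) a by (auto simp: cl2_of_real_def)
  then have "cl2_H ?u \<noteq> 0"
    by (simp add: cl2_intertwine_null_multiple(2))
  with cl2_intertwine_null_multiple(1)[of "c0 a" "c3 a", folded a] show ?thesis
    unfolding cl2_Z_def by (blast intro: cl2_inv_conjugate_eq)
qed

end
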